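(* Let $\Sigma=\{b\}$. There exists a 2R1CA over $\Sigma$ which accepts every input $b^{2^n}$ ($n\ge0$) with probability $1$ and rejects every other input $x\in\Sigma^*$ with probability $1$.
   Context: Let $\Gamma=\Sigma\cup\{\cent,\$\}$ with end-markers $\cent,\$\notin\Sigma$, $S=\{0,1\}$, $\mathrm{sign}(k)=0$ if $k=0$ and $1$ otherwise, and $\mu(\leftarrow)=-1,\mu(\downarrow)=0,\mu(\rightarrow)=+1$. 2Q1CA: $M=(Q,\Sigma,\delta,q_0,Q_{\rm acc},Q_{\rm rej})$ with finite $Q$, $q_0\in Q$, disjoint $Q_{\rm acc},Q_{\rm rej}\subset Q$, and $\delta:Q\times\Gamma\times S\times Q\times\{-1,0,+1\}\times\{\leftarrow,\downarrow,\rightarrow\}\to\mathbb{C}$ satisfying the well-formedness conditions below. For $\alpha,\beta\in\{-2,\dots,2\}$ let $W_{\alpha,\beta}(q_1,\sigma_1,s_1;q_2,\sigma_2,s_2)=\sum_{q'\in Q}\sum\overline{\delta(q_1,\sigma_1,s_1,q',c_1,d_1)}\,\delta(q_2,\sigma_2,s_2,q',c_2,d_2)$, inner sum over $(c_1,d_1),(c_2,d_2)$ with $c_2-c_1=\alpha$, $\mu(d_2)-\mu(d_1)=\beta$. Well-formedness: for all $q_1,q_2\in Q$, $\sigma,\sigma_1,\sigma_2\in\Gamma$, $s,s_1,s_2\in S$: (i) $W_{0,0}(q_1,\sigma,s;q_2,\sigma,s)=[q_1=q_2]$; (ii) $W_{0,\beta}(q_1,\sigma_1,s;q_2,\sigma_2,s)=0$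 for $\beta\in\{1,2\}$; (iii) $W_{\alpha,0}(q_1,\sigma,s_1;q_2,\sigma,s_2)=0$ for $\alpha\in\{1,2\}$; (iv) $W_{\alpha,\beta}(q_1,\sigma_1,s_1;q_2,\sigma_2,s_2)=0$ for $\alpha\in\{1,2\}$, $\beta\in\{-2,-1,1,2\}$. On input $x$ of length $n$ the circular tape holds $w_x=\cent x\$$ at positions $0,\dots,n+1$ (modulo $n+2$); configurations are $(q,a,b)\in Q\times\mathbb{Z}\times\{0,\dots,n+1\}$ and $U_x|q,a,b\rangle=\sum_{q',c,d}\delta(q,w_x(b),\mathrm{sign}(a),q',c,d)|q',a+c,b+\mu(d)\rangle$. Computation starts in $|q_0,0,0\rangle$; at each step $U_x$ is applied and then the state is measured w.r.t. the orthogonal decomposition into the spans of configurations whose state lies in $Q_{\rm acc}$, in $Q_{\rm rej}$, and in neither; outcomes "accept"/"reject" halt, otherwise the computation continues from the collapsed (renormalized) state. Acceptance (rejection) probability is the total probability of ever obtaining the outcome "accept" ("reject"). A 2R1CA is a 2Q1CA all of whose transition amplitudes lie in $\{0,1\}$. *)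

theory Defs
  imports "HOL-Analysis.Analysis"
begin

text \<open>Tape symbols: Gamma = Sigma plus the end-markers cent and dollar.
  The input alphabet Sigma is represented by the type 'a.\<close>
datatype 'a tsym = Cent | Dollar | Sym 'a

datatype dir = DL | DS | DR

fun mu :: "dir \<Rightarrow> int" where
  "mu DL = -1" | "mu DS = 0" | "mu DR = 1"

definition dirs :: "dir set" where "dirs = {DL, DS, DR}"
definition cdeltas :: "int set" where "cdeltas = {-1, 0, 1}"

text \<open>The counter-sign set S = {0,1} is represented by bool (False = 0, True = 1),
  and sign(k) is (k \<noteq> 0).\<close>
record 'a qca =
  qstates :: "nat set"
  qdelta :: "nat \<Rightarrow> 'a tsym \<Rightarrow> bool \<Rightarrow> nat \<Rightarrow> int \<Rightarrow> dir \<Rightarrow> complex"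
  qinit :: nat
  qacc :: "nat set"
  qrej :: "nat set"

definition Wsum :: "'a qca \<Rightarrow> int \<Rightarrow> int \<Rightarrow> nat \<Rightarrow> 'a tsym \<Rightarrow> bool \<Rightarrow> nat \<Rightarrow> 'a tsym \<Rightarrow> bool \<Rightarrow> complex" where
  "Wsum M \<alpha> \<beta> q1 \<sigma>1 s1 q2 \<sigma>2 s2 =
     (\<Sum>q'\<in>qstates M. \<Sum>c1\<in>cdeltas. \<Sum>d1\<in>dirs. \<Sum>c2\<in>cdeltas. \<Sum>d2\<in>dirs.
        if c2 - c1 = \<alpha> \<and> mu d2 - mu d1 = \<beta>
        then cnj (qdelta M q1 \<sigma>1 s1 q' c1 d1) * qdelta M q2 \<sigma>2 s2 q' c2 d2
        else 0)"

definition qca_struct :: "'a qca \<Rightarrow> bool" where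
  "qca_struct M \<longleftrightarrow>
     finite (qstates M) \<and> qinit M \<in> qstates M \<and>
     qacc M \<subseteq> qstates M \<and> qrej M \<subseteq> qstates M \<and> qacc M \<inter> qrej M = {} \<and>
     (\<forall>q \<sigma> s q' c d. qdelta M q \<sigma> s q' c d \<noteq> 0 \<longrightarrow>
        q \<in> qstates M \<and> q' \<in> qstates M \<and> c \<in> cdeltas)"

definition well_formed :: "'a qca \<Rightarrow> bool" where
  "well_formed M \<longleftrightarrow>
     (\<forall>q1\<in>qstates M. \<forall>q2\<in>qstates M.
       (\<forall>\<sigma> s. Wsum M 0 0 q1 \<sigma> s q2 \<sigma> s = (if q1 = q2 then 1 else 0)) \<and>
       (\<forall>\<beta>\<in>{1,2}. \<forall>\<sigma>1 \<sigma>2 s. Wsum M 0 \<beta> q1 \<sigma>1 s q2 \<sigma>2 s = 0) \<and>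
       (\<forall>\<alpha>\<in>{1,2}. \<forall>\<sigma> s1 s2. Wsum M \<alpha> 0 q1 \<sigma> s1 q2 \<sigma> s2 = 0) \<and>
       (\<forall>\<alpha>\<in>{1,2}. \<forall>\<beta>\<in>{-2,-1,1,2}. \<forall>\<sigma>1 \<sigma>2 s1 s2.
           Wsum M \<alpha> \<beta> q1 \<sigma>1 s1 q2 \<sigma>2 s2 = 0))"

definition is_2Q1CA :: "'a qca \<Rightarrow> bool" where
  "is_2Q1CA M \<longleftrightarrow> qca_struct M \<and> well_formed M"

definition is_2R1CA :: "'a qca \<Rightarrow> bool" where
  "is_2R1CA M \<longleftrightarrow> is_2Q1CA M \<and> (\<forall>q \<sigma> s q' c d. qdelta M q \<sigma> s q' c d \<in> {0, 1})"

text \<open>Circular tape content w_x = cent x dollar at positions 0..n+1.\<close>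
definition tape :: "'a list \<Rightarrow> int \<Rightarrow> 'a tsym" where
  "tape x b = (if b = 0 then Cent else if b = int (length x) + 1 then Dollar
               else Sym (x ! (nat b - 1)))"

text \<open>Configurations (q, a, b): state, counter value, head position in {0..n+1}.
  Vectors in the configuration space are functions to complex.\<close>
type_synonym conf = "nat \<times> int \<times> int"

definition Uop :: "'a qca \<Rightarrow> 'a list \<Rightarrow> (conf \<Rightarrow> complex) \<Rightarrow> conf \<Rightarrow> complex" where
  "Uop M x \<psi> = (\<lambda>(q', a', b').
     (\<Sum>q\<in>qstates M. \<Sum>c\<in>cdeltas. \<Sum>d\<in>dirs.
        \<Sum>b\<in>{bb \<in> {0..int (length x) + 1}. (bb + mu d) mod (int (length x) + 2) = b'}.
          \<psi> (q, a' - c, b) * qdelta M q (tape x b) (a' - c \<noteq> 0) q' c d))"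

definition proj :: "nat set \<Rightarrow> (conf \<Rightarrow> complex) \<Rightarrow> conf \<Rightarrow> complex" where
  "proj A \<psi> = (\<lambda>(q, a, b). if q \<in> A then \<psi> (q, a, b) else 0)"

definition nsq :: "(conf \<Rightarrow> complex) \<Rightarrow> real" where
  "nsq \<psi> = infsum (\<lambda>c. (cmod (\<psi> c))\<^sup>2) UNIV"

text \<open>Unnormalised non-halting state after t steps (measurement outcome
  "continue" obtained at each of the first t steps).\<close>
primrec psi :: "'a qca \<Rightarrow> 'a list \<Rightarrow> nat \<Rightarrow> conf \<Rightarrow> complex" where
  "psi M x 0 = (\<lambda>c. if c = (qinit M, 0, 0) then 1 else 0)"
| "psi M x (Suc t) = proj (- (qacc M \<union> qrej M)) (Uop M x (psi M x t))"

text \<open>Probability of outcome "accept" ("reject") exactly at step t+1.\<close>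
definition acc_step :: "'a qca \<Rightarrow> 'a list \<Rightarrow> nat \<Rightarrow> real" where
  "acc_step M x t = nsq (proj (qacc M) (Uop M x (psi M x t)))"

definition rej_step :: "'a qca \<Rightarrow> 'a list \<Rightarrow> nat \<Rightarrow> real" where
  "rej_step M x t = nsq (proj (qrej M) (Uop M x (psi M x t)))"

definition accepts_with_prob :: "'a qca \<Rightarrow> 'a list \<Rightarrow> real \<Rightarrow> bool" where
  "accepts_with_prob M x p \<longleftrightarrow> acc_step M x sums p"

definition rejects_with_prob :: "'a qca \<Rightarrow> 'a list \<Rightarrow> real \<Rightarrow> bool" where
  "rejects_with_prob M x p \<longleftrightarrow> rej_step M x sums p"

end

theory Submission
  imports Defs
begin

text \<open>
  For each scanned symbol and counter sign, the automaton below permutes its eight states, and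
  the counter change and head move are determined by the target state. Such an automaton is well
  formed, and its time evolution maps each configuration to a single configuration, so every
  computation is classical and accepts or rejects with probability 0 or 1.

  The automaton first sweeps to the right end-marker, loading the input length n into the counter.
  It then halves the counter k repeatedly: walking left one cell per two decrements leaves the
  head k div 2 cells left of the end-marker, and counting the cells back up to the end-marker
  reloads k div 2. An odd k shows up as one unit left over after the walk; the automaton accepts
  if this happens on the end-marker, i.e. k = 1, and rejects for any other odd k and for k = 0.
  Hence it accepts exactly when n is a power of two.
\<close>

lemma double_eq_power_of_two_iff: "(\<exists>m. 2 * j = (2::nat) ^ m) \<longleftrightarrow> (\<exists>m. j = 2 ^ m)"
proof
  assume "\<exists>m. 2 * j = (2::nat) ^ m"
  then obtain m where m: "2 * j = (2::nat) ^ m"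
    by blast
  show "\<exists>m. j = 2 ^ m"
  proof (cases m)
    case 0
    with m have "2 * j = 1"
      by simp
    then show ?thesis
      by presburger
  next
    case (Suc m')
    with m show ?thesis
      by auto
  qed
qed (metis power_Suc)

lemma odd_eq_power_of_two_iff: "(\<exists>m. 2 * j + 1 = (2::nat) ^ m) \<longleftrightarrow> j = 0"
proof
  assume "\<exists>m. 2 * j + 1 = (2::nat) ^ m"
  then obtain m where m: "2 * j + 1 = (2::nat) ^ m"
    by blast
  then show "j = 0"
    by (cases m) (simp_all, presburger)
qed (auto intro: exI[of _ 0])

lemma finite_cdeltas [simp]: "finite cdeltas"
  by (simp add: cdeltas_def)

lemma finite_dirs [simp]: "finite dirs"
  by (simp add: dirs_def)

lemma mem_dirs [simp]: "d \<in> dirs"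
  by (cases d) (simp_all add: dirs_def)

lemma sum_if_const_cond: "(\<Sum>x\<in>S. if P then f x else 0) = (if P then sum f S else 0)"
  by simp

lemma finite_positions: "finite {b::int. 0 \<le> b \<and> b \<le> n \<and> P b}"
  by (rule finite_subset[of _ "{0..n}"]) auto

definition ket :: "conf \<Rightarrow> conf \<Rightarrow> complex" where
  "ket C = (\<lambda>c. if c = C then 1 else 0)"

lemma nsq_ket [simp]: "nsq (ket C) = 1"
proof -
  have "infsum (\<lambda>c. (cmod (ket C c))\<^sup>2) UNIV = infsum (\<lambda>c. 1::real) {C}"
    by (rule infsum_cong_neutral) (auto simp: ket_def)
  then show ?thesis
    by (simp add: nsq_def)
qed

lemma nsq_zero [simp]: "nsq (\<lambda>_. 0) = 0"
  by (simp add: nsq_def)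

lemma proj_ket: "proj H (ket C) = (if fst C \<in> H then ket C else (\<lambda>_. 0))"
  by (auto simp: proj_def ket_def fun_eq_iff)

lemma proj_zero [simp]: "proj H (\<lambda>_. 0) = (\<lambda>_. 0)"
  by (auto simp: proj_def)

lemma Uop_zero [simp]: "Uop M x (\<lambda>_. 0) = (\<lambda>_. 0)"
  by (auto simp: Uop_def)

text \<open>
  The transition amplitude is 1 exactly when q' = V \<sigma> s q and (c, d) is the move attached to the
  target state q', so well-formedness reduces to each V \<sigma> s being a permutation of the states.
\<close>

locale permutation_qca =
  fixes N :: nat
    and V :: "'a tsym \<Rightarrow> bool \<Rightarrow> nat \<Rightarrow> nat"
    and cnt :: "nat \<Rightarrow> int"
    and mv :: "nat \<Rightarrow> dir"
    and q0 :: nat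
    and A R :: "nat set"
  assumes V_bij: "bij_betw (V \<sigma> s) {..<N} {..<N}"
    and cnt_range: "q < N \<Longrightarrow> cnt q \<in> cdeltas"
    and q0_state: "q0 < N"
    and halting_states: "A \<subseteq> {..<N}" "R \<subseteq> {..<N}" "A \<inter> R = {}"
begin

definition machine :: "'a qca" where
  "machine = \<lparr>qstates = {..<N},
     qdelta = (\<lambda>q \<sigma> s q' c d. if q < N \<and> q' = V \<sigma> s q \<and> c = cnt q' \<and> d = mv q' then 1 else 0),
     qinit = q0, qacc = A, qrej = R\<rparr>"

lemma V_state: "q < N \<Longrightarrow> V \<sigma> s q < N"
  using bij_betw_apply[OF V_bij] by blast

lemma V_eq_iff: "q1 < N \<Longrightarrow> q2 < N \<Longrightarrow> V \<sigma> s q1 = V \<sigma> s q2 \<longleftrightarrow> q1 = q2"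
  using bij_betw_imp_inj_on[OF V_bij] by (auto dest: inj_onD)

lemma machine_simps [simp]:
  "qstates machine = {..<N}" "qinit machine = q0" "qacc machine = A" "qrej machine = R"
  "qdelta machine q \<sigma> s q' c d = (if q < N \<and> q' = V \<sigma> s q \<and> c = cnt q' \<and> d = mv q' then 1 else 0)"
  by (simp_all add: machine_def)

lemma Wsum_machine:
  assumes "q1 < N" "q2 < N"
  shows "Wsum machine \<alpha> \<beta> q1 \<sigma>1 s1 q2 \<sigma>2 s2 =
    (if V \<sigma>1 s1 q1 = V \<sigma>2 s2 q2 \<and> \<alpha> = 0 \<and> \<beta> = 0 then 1 else 0)"
proof -
  let ?q = "V \<sigma>1 s1 q1"
  have summand: "(if c2 - c1 = \<alpha> \<and> mu d2 - mu d1 = \<beta>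
        then cnj (qdelta machine q1 \<sigma>1 s1 q' c1 d1) * qdelta machine q2 \<sigma>2 s2 q' c2 d2 else 0) =
      (if d2 = mv q' then if c2 = cnt q' then if d1 = mv q' then if c1 = cnt q' then
         if q' = ?q \<and> V \<sigma>2 s2 q2 = ?q \<and> \<alpha> = 0 \<and> \<beta> = 0 then 1 else 0
       else 0 else 0 else 0 else 0)" for q' c1 d1 c2 d2
    using assms by auto
  have "Wsum machine \<alpha> \<beta> q1 \<sigma>1 s1 q2 \<sigma>2 s2 =
     (\<Sum>q'\<in>{..<N}. if q' = ?q \<and> V \<sigma>2 s2 q2 = ?q \<and> \<alpha> = 0 \<and> \<beta> = 0 then 1 else 0)"
    unfolding Wsum_def summand
    by (simp only: sum.delta finite_cdeltas finite_dirs) (simp add: cnt_range)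
  also have "\<dots> = (if V \<sigma>1 s1 q1 = V \<sigma>2 s2 q2 \<and> \<alpha> = 0 \<and> \<beta> = 0 then 1 else 0)"
    using V_state[OF assms(1)] V_state[OF assms(2)] by (auto simp: sum.delta)
  finally show ?thesis .
qed

theorem machine_is_2R1CA: "is_2R1CA machine"
  unfolding is_2R1CA_def is_2Q1CA_def qca_struct_def well_formed_def
  using q0_state halting_states by (auto simp: Wsum_machine V_state V_eq_iff cnt_range)

definition step :: "'a list \<Rightarrow> conf \<Rightarrow> conf" where
  "step x = (\<lambda>(q, a, b). let q' = V (tape x b) (a \<noteq> 0) q in
     (q', a + cnt q', (b + mu (mv q')) mod (int (length x) + 2)))"

lemma Uop_ket:
  assumes "q < N" "0 \<le> b" "b \<le> int (length x) + 1"
  shows "Uop machine x (ket (q, a, b)) = ket (step x (q, a, b))"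
proof (intro ext, clarify)
  fix q' a' b'
  let ?V = "V (tape x b) (a \<noteq> 0) q"
  have summand: "ket (q, a, b) (p, a' - c, bb) * qdelta machine p (tape x bb) (a' - c \<noteq> 0) q' c d =
    (if p = q then if c = cnt q' then if d = mv q' then if bb = b then
       if q' = ?V \<and> a' - cnt q' = a then 1 else 0 else 0 else 0 else 0 else 0)" for p c d bb
    using assms by (auto simp: ket_def)
  show "Uop machine x (ket (q, a, b)) (q', a', b') = ket (step x (q, a, b)) (q', a', b')"
    unfolding Uop_def prod.case summand using assms
    by (simp add: sum_if_const_cond finite_positions)
      (auto simp: step_def ket_def Let_def V_state cnt_range)
qed

definition run :: "'a list \<Rightarrow> nat \<Rightarrow> conf" where
  "run x t = (step x ^^ t) (q0, 0, 0)"

lemma Uop_run: "Uop machine x (ket (run x t)) = ket (run x (Suc t))"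
proof -
  have mod_bound: "k mod (int (length x) + 2) \<le> int (length x) + 1" for k
    using pos_mod_bound[of "int (length x) + 2" k] by linarith
  have "fst (run x t) < N \<and> snd (snd (run x t)) \<in> {0..int (length x) + 1}"
    by (induction t) (auto simp: run_def step_def Let_def q0_state V_state mod_bound split: prod.splits)
  then show ?thesis
    using Uop_ket by (cases "run x t") (simp add: run_def)
qed

lemma psi_machine:
  "psi machine x t = (if \<forall>i\<in>{1..t}. fst (run x i) \<notin> A \<union> R then ket (run x t) else (\<lambda>_. 0))"
proof (induction t)
  case 0
  show ?case
    by (simp add: run_def ket_def)
next
  case (Suc t)
  have "{1..Suc t} = insert (Suc t) {1..t}"
    by auto
  then show ?case
    using Suc by (simp add: Uop_run proj_ket)
qed

lemma halting_prob_machine: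
  "nsq (proj H (Uop machine x (psi machine x t))) =
     (if (\<forall>i\<in>{1..t}. fst (run x i) \<notin> A \<union> R) \<and> fst (run x (Suc t)) \<in> H then 1 else 0)"
  by (simp add: psi_machine Uop_run proj_ket)

lemma halting_prob_sums_one:
  assumes "H \<subseteq> A \<union> R" "\<forall>i\<in>{1..T}. fst (run x i) \<notin> A \<union> R" "fst (run x (Suc T)) \<in> H"
  shows "(\<lambda>t. nsq (proj H (Uop machine x (psi machine x t)))) sums 1"
proof -
  have "(\<lambda>t. nsq (proj H (Uop machine x (psi machine x t)))) = (\<lambda>t. if t = T then 1 else 0)"
  proof
    fix t
    consider "t < T" | "t = T" | "T < t"
      by linarith
    then show "nsq (proj H (Uop machine x (psi machine x t))) = (if t = T then 1 else 0)"
      unfolding halting_prob_machine using assms by cases (fastforce+)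
  qed
  then show ?thesis
    using sums_single[of T "\<lambda>_. 1::real"] by simp
qed

inductive reaches :: "'a list \<Rightarrow> conf \<Rightarrow> conf \<Rightarrow> bool" for x where
  reaches_refl: "fst C \<notin> A \<union> R \<Longrightarrow> reaches x C C"
| reaches_step: "fst C \<notin> A \<union> R \<Longrightarrow> reaches x (step x C) D \<Longrightarrow> reaches x C D"

lemma reaches_trans [trans]: "reaches x C D \<Longrightarrow> reaches x D E \<Longrightarrow> reaches x C E"
  by (induction rule: reaches.induct) (auto intro: reaches_step)

lemma reaches_stepI:
  "fst C \<notin> A \<union> R \<Longrightarrow> fst D \<notin> A \<union> R \<Longrightarrow> step x C = D \<Longrightarrow> reaches x C D"
  by (auto intro: reaches.intros)

lemma reaches_iterate:
  "reaches x C D \<Longrightarrow> \<exists>k. (step x ^^ k) C = D \<and> (\<forall>i\<le>k. fst ((step x ^^ i) C) \<notin> A \<union> R)"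
proof (induction rule: reaches.induct)
  case (reaches_refl C)
  then show ?case
    by (intro exI[of _ 0]) auto
next
  case (reaches_step C D)
  then obtain k where k: "(step x ^^ k) (step x C) = D"
    "\<forall>i\<le>k. fst ((step x ^^ i) (step x C)) \<notin> A \<union> R"
    by blast
  have "fst ((step x ^^ i) C) \<notin> A \<union> R" if "i \<le> Suc k" for i
  proof (cases i)
    case 0
    then show ?thesis
      using reaches_step.hyps(1) by simp
  next
    case (Suc j)
    then show ?thesis
      using k(2) that by (simp add: funpow_Suc_right del: funpow.simps)
  qed
  with k(1) show ?case
    by (intro exI[of _ "Suc k"]) (simp add: funpow_Suc_right del: funpow.simps)
qed

definition ends_in :: "'a list \<Rightarrow> conf \<Rightarrow> nat \<Rightarrow> bool" where
  "ends_in x C q \<longleftrightarrow> (\<exists>D. reaches x C D \<and> fst (step x D) = q)"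

lemma ends_inI: "fst C \<notin> A \<union> R \<Longrightarrow> fst (step x C) = q \<Longrightarrow> ends_in x C q"
  unfolding ends_in_def by (blast intro: reaches_refl)

lemma reaches_ends_in: "reaches x C D \<Longrightarrow> ends_in x D q \<Longrightarrow> ends_in x C q"
  by (auto simp: ends_in_def intro: reaches_trans)

lemma halting_prob_sums_one_if_ends_in:
  assumes "ends_in x (q0, 0, 0) q" "q \<in> H" "H \<subseteq> A \<union> R"
  shows "(\<lambda>t. nsq (proj H (Uop machine x (psi machine x t)))) sums 1"
proof -
  obtain D where D: "reaches x (q0, 0, 0) D" "fst (step x D) = q"
    using assms(1) by (auto simp: ends_in_def)
  then obtain T where T: "run x T = D" "\<forall>i\<le>T. fst (run x i) \<notin> A \<union> R"
    unfolding run_def by (blast dest: reaches_iterate)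
  then have "run x (Suc T) = step x D"
    by (simp add: run_def)
  then show ?thesis
    using T(2) D(2) assms(2,3) by (intro halting_prob_sums_one[where T = T]) auto
qed

theorem accepts_if_ends_in:
  "ends_in (x :: 'a list) (q0, 0, 0) q \<Longrightarrow> q \<in> A \<Longrightarrow> accepts_with_prob machine x 1"
  unfolding accepts_with_prob_def acc_step_def
  using halting_prob_sums_one_if_ends_in[of x q A] by simp

theorem rejects_if_ends_in:
  "ends_in (x :: 'a list) (q0, 0, 0) q \<Longrightarrow> q \<in> R \<Longrightarrow> rejects_with_prob machine x 1"
  unfolding rejects_with_prob_def rej_step_def
  using halting_prob_sums_one_if_ends_in[of x q R] by simp

end

text \<open>
  States: 0 initial; 1 sweeps right, counting cells; 2, 3, 4 walk left one cell per two
  decrements; 5 turns around when the counter hits 0 inside the tape; 6 accepts; 7 rejects.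
  Row (\<sigma>, s) lists the successor of each state; its entries that no computation uses only
  complete it to a permutation.
\<close>

fun pow2_table :: "unit tsym \<Rightarrow> bool \<Rightarrow> nat list" where
  "pow2_table Cent False = [1, 0, 2, 3, 4, 5, 6, 7]"
| "pow2_table Cent True = [0, 1, 2, 3, 4, 5, 6, 7]"
| "pow2_table (Sym _) False = [0, 2, 5, 7, 4, 1, 6, 3]"
| "pow2_table (Sym _) True = [0, 1, 3, 4, 2, 5, 6, 7]"
| "pow2_table Dollar False = [0, 1, 7, 6, 4, 5, 2, 3]"
| "pow2_table Dollar True = [0, 2, 3, 4, 1, 5, 6, 7]"

definition pow2_counter :: "nat \<Rightarrow> int" where
  "pow2_counter q = [0, 1, -1, -1, 0, 0, 0, 0] ! q"

definition pow2_move :: "nat \<Rightarrow> dir" where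
  "pow2_move q = [DS, DR, DS, DS, DL, DL, DS, DS] ! q"

interpretation pow2:
  permutation_qca 8 "\<lambda>\<sigma> s. (!) (pow2_table \<sigma> s)" pow2_counter pow2_move 0 "{6}" "{7}"
proof
  show "bij_betw ((!) (pow2_table \<sigma> s)) {..<8} {..<8}" for \<sigma> s
    by (rule bij_betw_nth) (cases \<sigma>; cases s; auto simp: lessThan_nat_numeral)+
  show "pow2_counter q \<in> cdeltas" if "q < 8" for q
    using nth_mem[of q "[0, 1, -1, -1, 0, 0, 0, 0 :: int]"] that
    by (auto simp: pow2_counter_def cdeltas_def)
qed auto

lemma pow2_step_start: "pow2.step x (0, 0, 0) = (1, 1, 1)"
  by (simp add: pow2.step_def pow2_counter_def pow2_move_def tape_def)

lemma pow2_step_count: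
  "1 \<le> p \<Longrightarrow> p \<le> int (length x) \<Longrightarrow> a \<noteq> 0 \<Longrightarrow> pow2.step x (1, a, p) = (1, a + 1, p + 1)"
  by (simp add: pow2.step_def pow2_counter_def pow2_move_def tape_def)

lemma pow2_step_count_end:
  "a \<noteq> 0 \<Longrightarrow> pow2.step x (1, a, int (length x) + 1) = (2, a - 1, int (length x) + 1)"
  by (simp add: pow2.step_def pow2_counter_def pow2_move_def tape_def)

lemma pow2_step_halve_dec1:
  "1 \<le> p \<Longrightarrow> p \<le> int (length x) + 1 \<Longrightarrow> a \<noteq> 0 \<Longrightarrow> pow2.step x (2, a, p) = (3, a - 1, p)"
  by (cases "p = int (length x) + 1") (simp_all add: pow2.step_def pow2_counter_def pow2_move_def tape_def)

lemma pow2_step_halve_move: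
  "1 \<le> p \<Longrightarrow> p \<le> int (length x) + 1 \<Longrightarrow> a \<noteq> 0 \<Longrightarrow> pow2.step x (3, a, p) = (4, a, p - 1)"
  by (cases "p = int (length x) + 1") (simp_all add: pow2.step_def pow2_counter_def pow2_move_def tape_def)

lemma pow2_step_halve_dec2:
  "1 \<le> p \<Longrightarrow> p \<le> int (length x) \<Longrightarrow> a \<noteq> 0 \<Longrightarrow> pow2.step x (4, a, p) = (2, a - 1, p)"
  by (simp add: pow2.step_def pow2_counter_def pow2_move_def tape_def)

lemma pow2_step_turn:
  "1 \<le> p \<Longrightarrow> p \<le> int (length x) \<Longrightarrow> pow2.step x (2, 0, p) = (5, 0, p - 1)"
  by (simp add: pow2.step_def pow2_counter_def pow2_move_def tape_def)

lemma pow2_step_restart: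
  "1 \<le> p \<Longrightarrow> p \<le> int (length x) \<Longrightarrow> pow2.step x (5, 0, p) = (1, 1, p + 1)"
  by (simp add: pow2.step_def pow2_counter_def pow2_move_def tape_def)

lemma pow2_step_reject_zero: "fst (pow2.step x (2, 0, int (length x) + 1)) = 7"
  by (simp add: pow2.step_def tape_def)

lemma pow2_step_accept: "fst (pow2.step x (3, 0, int (length x) + 1)) = 6"
  by (simp add: pow2.step_def tape_def)

lemma pow2_step_reject_odd:
  "1 \<le> p \<Longrightarrow> p \<le> int (length x) \<Longrightarrow> fst (pow2.step x (3, 0, p)) = 7"
  by (simp add: pow2.step_def tape_def)

lemma pow2_reaches_count:
  "m \<le> length x \<Longrightarrow> 1 \<le> a \<Longrightarrow>
    pow2.reaches x (1, a, int (length x) + 1 - int m) (1, a + int m, int (length x) + 1)"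
proof (induction m arbitrary: a)
  case 0
  show ?case
    by (simp add: pow2.reaches_refl)
next
  case (Suc m)
  have "pow2.reaches x (1, a, int (length x) + 1 - int (Suc m)) (1, a + 1, int (length x) + 1 - int m)"
    using Suc.prems pow2_step_count by (intro pow2.reaches_stepI) simp_all
  also have "pow2.reaches x \<dots> (1, a + int (Suc m), int (length x) + 1)"
    using Suc.IH[of "a + 1"] Suc.prems by (simp add: add.assoc)
  finally show ?case .
qed

lemma pow2_reaches_halve:
  "2 * int j \<le> r \<Longrightarrow> 1 \<le> p - int j \<Longrightarrow> p \<le> int (length x) + 1 \<Longrightarrow>
    pow2.reaches x (2, r, p) (2, r - 2 * int j, p - int j)"
proof (induction j arbitrary: r p)
  case 0
  show ?case
    by (simp add: pow2.reaches_refl)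
next
  case (Suc j)
  have "pow2.reaches x (2, r, p) (3, r - 1, p)"
    using Suc.prems by (intro pow2.reaches_stepI) (simp_all add: pow2_step_halve_dec1)
  also have "pow2.reaches x \<dots> (4, r - 1, p - 1)"
    using Suc.prems by (intro pow2.reaches_stepI) (simp_all add: pow2_step_halve_move)
  also have "pow2.reaches x \<dots> (2, r - 2, p - 1)"
    using Suc.prems by (intro pow2.reaches_stepI) (simp_all add: pow2_step_halve_dec2)
  also have "pow2.reaches x \<dots> (2, r - 2 * int (Suc j), p - int (Suc j))"
    using Suc.IH[of "r - 2" "p - 1"] Suc.prems by (simp add: algebra_simps)
  finally show ?case .
qed

lemma pow2_reaches_halving_round:
  assumes "1 \<le> j" "2 * j \<le> length x"
  shows "pow2.reaches x (2, 2 * int j, int (length x) + 1) (2, int j, int (length x) + 1)"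
proof -
  let ?n = "int (length x)"
  have "pow2.reaches x (2, 2 * int j, ?n + 1) (2, 0, ?n + 1 - int j)"
    using pow2_reaches_halve[of j "2 * int j" "?n + 1" x] assms by simp
  also have "pow2.reaches x \<dots> (5, 0, ?n - int j)"
    using assms by (intro pow2.reaches_stepI) (simp_all add: pow2_step_turn)
  also have "pow2.reaches x \<dots> (1, 1, ?n + 1 - int j)"
    using assms by (intro pow2.reaches_stepI) (simp_all add: pow2_step_restart)
  also have "pow2.reaches x \<dots> (1, 1 + int j, ?n + 1)"
    using pow2_reaches_count[of j x 1] assms by simp
  also have "pow2.reaches x \<dots> (2, int j, ?n + 1)"
    using pow2_step_count_end by (intro pow2.reaches_stepI) simp_all
  finally show ?thesis .
qed

lemma pow2_ends_in_odd:
  assumes "2 * j + 1 \<le> length x"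
  shows "pow2.ends_in x (2, 2 * int j + 1, int (length x) + 1) (if j = 0 then 6 else 7)"
proof -
  let ?n = "int (length x)"
  have "pow2.reaches x (2, 2 * int j + 1, ?n + 1) (2, 1, ?n + 1 - int j)"
    using pow2_reaches_halve[of j "2 * int j + 1" "?n + 1" x] assms by simp
  also have "pow2.reaches x \<dots> (3, 0, ?n + 1 - int j)"
    using assms by (intro pow2.reaches_stepI) (simp_all add: pow2_step_halve_dec1)
  finally show ?thesis
    using assms by (elim pow2.reaches_ends_in, intro pow2.ends_inI)
      (auto simp: pow2_step_accept pow2_step_reject_odd)
qed

lemma pow2_ends_in_halving:
  "k \<le> length x \<Longrightarrow>
    pow2.ends_in x (2, int k, int (length x) + 1) (if \<exists>m. k = 2 ^ m then 6 else 7)"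
proof (induction k rule: less_induct)
  case (less k)
  obtain j where "k = 2 * j \<or> k = 2 * j + 1"
    by (metis oddE evenE)
  then consider "k = 0" | "k = 2 * j" "1 \<le> j" | "k = 2 * j + 1"
    by linarith
  then show ?case
  proof cases
    case 1
    then show ?thesis
      by (intro pow2.ends_inI) (simp_all add: pow2_step_reject_zero)
  next
    case 2
    then have "pow2.ends_in x (2, int j, int (length x) + 1) (if \<exists>m. k = 2 ^ m then 6 else 7)"
      using less.IH[of j] less.prems by (simp add: double_eq_power_of_two_iff)
    then show ?thesis
      using 2 less.prems pow2_reaches_halving_round[of j x] by (auto intro: pow2.reaches_ends_in)
  next
    case 3
    then have "pow2.ends_in x (2, 2 * int j + 1, int (length x) + 1) (if j = 0 then 6 else 7)"
      using less.prems by (intro pow2_ends_in_odd) simp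
    moreover have "int k = 2 * int j + 1" "(\<exists>m. k = 2 ^ m) \<longleftrightarrow> j = 0"
      using 3 odd_eq_power_of_two_iff[of j] by simp_all
    ultimately show ?thesis
      by (simp only:)
  qed
qed

lemma pow2_ends_in:
  "pow2.ends_in x (0, 0, 0) (if \<exists>m. length x = 2 ^ m then 6 else 7)"
proof -
  let ?n = "int (length x)"
  have "pow2.reaches x (0, 0, 0) (1, 1, 1)"
    by (intro pow2.reaches_stepI) (simp_all add: pow2_step_start)
  also have "pow2.reaches x \<dots> (1, 1 + ?n, ?n + 1)"
    using pow2_reaches_count[of "length x" x 1] by simp
  also have "pow2.reaches x \<dots> (2, ?n, ?n + 1)"
    using pow2_step_count_end by (intro pow2.reaches_stepI) simp_all
  finally show ?thesis
    using pow2_ends_in_halving[of "length x" x] by (auto intro: pow2.reaches_ends_in)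
qed

theorem lemma16:
  shows "\<exists>M :: unit qca. is_2R1CA M \<and>
     (\<forall>x :: unit list.
        ((\<exists>n::nat. length x = 2 ^ n) \<longrightarrow> accepts_with_prob M x 1) \<and>
        (\<not> (\<exists>n::nat. length x = 2 ^ n) \<longrightarrow> rejects_with_prob M x 1))"
proof (intro exI[of _ pow2.machine] conjI allI impI)
  show "is_2R1CA pow2.machine"
    by (rule pow2.machine_is_2R1CA)
next
  fix x :: "unit list"
  show "accepts_with_prob pow2.machine x 1" if "\<exists>n. length x = 2 ^ n"
    using pow2_ends_in[of x] that by (intro pow2.accepts_if_ends_in) auto
  show "rejects_with_prob pow2.machine x 1" if "\<not> (\<exists>n. length x = 2 ^ n)"
    using pow2_ends_in[of x] that by (intro pow2.rejects_if_ends_in) auto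
qed

end
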